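(* Let $\mathcal M$ satisfy sufficient demand and let $(X^*,p^* )$ be a market equilibrium of $\mathcal M$. Then for every agent $i\in A$ and every optimal solution $(\beta_i,\gamma_i)$ of the dual of OB-LP$(i)$ at prices $p^*$, we have $\gamma_i>0$. Consequently $\sum_j p^*_jx^*_{ij}=m_i$ for every $i\in A$.
   Context: A market $\mathcal M$ consists of a finite set $A$ of agents, a finite set $G$ of divisible goods, each with supply $1$, and a finite index set $C$. Each agent $i$ has real coefficients $a_{ijk}$, requirements $r_{ik}\ge0$, delays $d_{ij}\ge 0$, budget $m_i>0$. CC$(i)$: $\sum_{j}a_{ijk}x_{ij}\ge r_{ik}$ for all $k$, $x_{ij}\ge0$. $X$ is supply respecting if $\sum_i x_{ij}\le1$ for all $j$. $(X,p)$ is a market equilibrium if $X$ is supply respecting, each $\mathbf x_i$ is an optimal solution of OB-LP$(i)$ at $p$, and $\sum_i x_{ij}<1\Rightarrow p_j=0$. OB-LP$(i)$ at prices $p$ is: minimize $\sum_j d_{ij}x_{ij}$ s.t. CC$(i)$ and $\sum_jp_jx_{ij}\le m_i$. Its dual has variables $\beta_{ik}\ge0$ ($k\in C$) for the covering constraints and $\gamma_i\ge0$ for the budget constraint: maximize $\sum_k r_{ik}\beta_{ik}-m_i\gamma_i$ s.t. $d_{ij}\ge\sum_k a_{ijk}\beta_{ik}-\gamma_ip_j$ for all $j$. $\mathcal M$ satisfies sufficient demand if for every agent $i$, every optimal solution of "minimize $\sum_j d_{ij}x_{ij}$ s.t. CC$(i)$" has some good $j$ with $x_{ij}>1$. *)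

theory Defs
  imports "HOL-Analysis.Analysis"
begin

text \<open>Market: agents A, goods G, covering-constraint index set C (all finite),
  coefficients a i j k, requirements r i k, delays d i j, budgets m i.
  Allocations X i j, prices p j.\<close>

definition CC :: "'g set \<Rightarrow> 'c set \<Rightarrow> ('a \<Rightarrow> 'g \<Rightarrow> 'c \<Rightarrow> real) \<Rightarrow> ('a \<Rightarrow> 'c \<Rightarrow> real)
    \<Rightarrow> 'a \<Rightarrow> ('g \<Rightarrow> real) \<Rightarrow> bool" where
  "CC G C a r i x \<longleftrightarrow>
     (\<forall>k\<in>C. (\<Sum>j\<in>G. a i j k * x j) \<ge> r i k) \<and> (\<forall>j\<in>G. x j \<ge> 0)"

definition supply_respecting :: "'a set \<Rightarrow> 'g set \<Rightarrow> ('a \<Rightarrow> 'g \<Rightarrow> real) \<Rightarrow> bool" where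
  "supply_respecting A G X \<longleftrightarrow> (\<forall>j\<in>G. (\<Sum>i\<in>A. X i j) \<le> 1)"

definition OB_feasible where
  "OB_feasible G C a r m i p x \<longleftrightarrow> CC G C a r i x \<and> (\<Sum>j\<in>G. p j * x j) \<le> m i"

definition OB_optimal :: "'g set \<Rightarrow> 'c set \<Rightarrow> ('a \<Rightarrow> 'g \<Rightarrow> 'c \<Rightarrow> real) \<Rightarrow> ('a \<Rightarrow> 'c \<Rightarrow> real)
    \<Rightarrow> ('a \<Rightarrow> 'g \<Rightarrow> real) \<Rightarrow> ('a \<Rightarrow> real) \<Rightarrow> 'a \<Rightarrow> ('g \<Rightarrow> real) \<Rightarrow> ('g \<Rightarrow> real) \<Rightarrow> bool" where
  "OB_optimal G C a r d m i p x \<longleftrightarrow>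
     OB_feasible G C a r m i p x \<and>
     (\<forall>y. OB_feasible G C a r m i p y \<longrightarrow> (\<Sum>j\<in>G. d i j * x j) \<le> (\<Sum>j\<in>G. d i j * y j))"

definition dual_feasible where
  "dual_feasible G C a d i p \<beta> \<gamma> \<longleftrightarrow>
     (\<forall>k\<in>C. \<beta> k \<ge> 0) \<and> \<gamma> \<ge> 0 \<and>
     (\<forall>j\<in>G. d i j \<ge> (\<Sum>k\<in>C. a i j k * \<beta> k) - \<gamma> * p j)"

definition dual_obj :: "'c set \<Rightarrow> ('a \<Rightarrow> 'c \<Rightarrow> real) \<Rightarrow> ('a \<Rightarrow> real) \<Rightarrow> 'a \<Rightarrow> ('c \<Rightarrow> real) \<Rightarrow> real \<Rightarrow> real" where
  "dual_obj C r m i \<beta> \<gamma> = (\<Sum>k\<in>C. r i k * \<beta> k) - m i * \<gamma>"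

definition dual_optimal :: "'g set \<Rightarrow> 'c set \<Rightarrow> ('a \<Rightarrow> 'g \<Rightarrow> 'c \<Rightarrow> real) \<Rightarrow> ('a \<Rightarrow> 'c \<Rightarrow> real)
    \<Rightarrow> ('a \<Rightarrow> 'g \<Rightarrow> real) \<Rightarrow> ('a \<Rightarrow> real) \<Rightarrow> 'a \<Rightarrow> ('g \<Rightarrow> real) \<Rightarrow> ('c \<Rightarrow> real) \<Rightarrow> real \<Rightarrow> bool" where
  "dual_optimal G C a r d m i p \<beta> \<gamma> \<longleftrightarrow>
     dual_feasible G C a d i p \<beta> \<gamma> \<and>
     (\<forall>\<beta>' \<gamma>'. dual_feasible G C a d i p \<beta>' \<gamma>' \<longrightarrow> dual_obj C r m i \<beta>' \<gamma>' \<le> dual_obj C r m i \<beta> \<gamma>)"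

definition market_equilibrium where
  "market_equilibrium A G C a r d m X p \<longleftrightarrow>
     supply_respecting A G X \<and>
     (\<forall>i\<in>A. OB_optimal G C a r d m i p (X i)) \<and>
     (\<forall>j\<in>G. (\<Sum>i\<in>A. X i j) < 1 \<longrightarrow> p j = 0)"

definition CC_optimal where
  "CC_optimal G C a r d i x \<longleftrightarrow>
     CC G C a r i x \<and> (\<forall>y. CC G C a r i y \<longrightarrow> (\<Sum>j\<in>G. d i j * x j) \<le> (\<Sum>j\<in>G. d i j * y j))"

definition sufficient_demand where
  "sufficient_demand A G C a r d \<longleftrightarrow>
     (\<forall>i\<in>A. \<forall>x. CC_optimal G C a r d i x \<longrightarrow> (\<exists>j\<in>G. x j > 1))"

end

theory Submission
  imports Defs
begin

text \<open>Sufficient demand makes every equilibrium bundle \<open>X i\<close>, whose entries are at most 1 by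
  supply, suboptimal for the budget-free problem: some \<open>y\<close> satisfying CC(i) has strictly smaller
  delay. If the budget of \<open>i\<close> had slack, moving from \<open>X i\<close> slightly towards \<open>y\<close> would stay
  affordable and reduce the delay. If a dual optimum had \<open>\<gamma> = 0\<close>, the budget would play no role in
  weak duality, so its value would be at most the delay of \<open>y\<close>; but by LP strong duality (obtained
  from Farkas' lemma, proved by Fourier--Motzkin elimination) dual values come arbitrarily close to
  the delay of \<open>X i\<close>.\<close>

lemma sum_scaled_diff:
  fixes f g h :: "'i \<Rightarrow> real"
  shows "(\<Sum>i\<in>I. (\<alpha> * f i - \<gamma> * g i) * h i) = \<alpha> * (\<Sum>i\<in>I. f i * h i) - \<gamma> * (\<Sum>i\<in>I. g i * h i)"
  by (simp add: sum_subtractf sum_distrib_left algebra_simps)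

lemma finite_interval_separation:
  fixes f g :: "'k \<Rightarrow> real"
  assumes "finite P" "finite N" "\<And>p n. p \<in> P \<Longrightarrow> n \<in> N \<Longrightarrow> f p \<le> g n"
  shows "\<exists>t. (\<forall>p\<in>P. f p \<le> t) \<and> (\<forall>n\<in>N. t \<le> g n)"
proof (cases "P = {}")
  case True
  show ?thesis
  proof (cases "N = {}")
    case False
    with True assms(2) show ?thesis by (intro exI[of _ "Min (g ` N)"]) auto
  qed (use True in auto)
next
  case False
  with assms show ?thesis by (intro exI[of _ "Max (f ` P)"]) (auto intro: Max.boundedI)
qed

lemma fourier_motzkin_elimination:
  fixes R :: "'k \<Rightarrow> 'v \<Rightarrow> real" and \<beta> :: "'k \<Rightarrow> real"
  assumes "finite K" "finite V" "u \<notin> V"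
    and zero: "\<And>k. k \<in> K \<Longrightarrow> R k u = 0 \<Longrightarrow> \<beta> k \<le> (\<Sum>v\<in>V. R k v * x v)"
    and pair: "\<And>p n. p \<in> K \<Longrightarrow> n \<in> K \<Longrightarrow> R p u > 0 \<Longrightarrow> R n u < 0 \<Longrightarrow>
        R p u * \<beta> n - R n u * \<beta> p \<le> (\<Sum>v\<in>V. (R p u * R n v - R n u * R p v) * x v)"
  shows "\<exists>t. \<forall>k\<in>K. \<beta> k \<le> (\<Sum>v\<in>insert u V. R k v * (x(u := t)) v)"
proof -
  define s where "s k = (\<Sum>v\<in>V. R k v * x v)" for k
  define bound where "bound k = (\<beta> k - s k) / R k u" for k
  define P where "P = {k\<in>K. R k u > 0}"
  define N where "N = {k\<in>K. R k u < 0}"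
  have "bound p \<le> bound n" if "p \<in> P" "n \<in> N" for p n
  proof -
    have "R p u * \<beta> n - R n u * \<beta> p \<le> R p u * s n - R n u * s p"
      using pair[of p n] that unfolding P_def N_def s_def by (simp add: sum_scaled_diff)
    moreover have "R p u > 0" "R n u < 0" using that unfolding P_def N_def by auto
    ultimately show ?thesis unfolding bound_def by (simp add: divide_simps) argo
  qed
  then obtain t where lower: "\<forall>p\<in>P. bound p \<le> t" and upper: "\<forall>n\<in>N. t \<le> bound n"
    using finite_interval_separation[of P N bound bound] \<open>finite K\<close> P_def N_def by auto
  have "\<beta> k \<le> (\<Sum>v\<in>insert u V. R k v * (x(u := t)) v)" if k: "k \<in> K" for k
  proof -
    have "(\<Sum>v\<in>insert u V. R k v * (x(u := t)) v) = R k u * t + s k"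
      unfolding s_def using assms(2,3) by (simp add: sum.insert) (intro sum.cong; auto)
    moreover consider "R k u = 0" | "k \<in> P" | "k \<in> N" using k P_def N_def by fastforce
    then have "\<beta> k - s k \<le> R k u * t"
    proof cases
      case 1 then show ?thesis using zero[OF k] s_def by simp
    next
      case 2 then show ?thesis using lower P_def by (auto simp: bound_def divide_simps mult.commute)
    next
      case 3 then show ?thesis using upper N_def by (auto simp: bound_def divide_simps mult.commute)
    qed
    ultimately show ?thesis by simp
  qed
  then show ?thesis by blast
qed

text \<open>Derived inequalities are indexed by their multiplier vectors \<open>c\<close>, standing for
  \<open>\<Sum>i. c i * (A i \<cdot> x) \<ge> \<Sum>i. c i * b i\<close>; the variables in \<open>W - V\<close> have already been eliminated.
  Keeping the multipliers as indices means that the certificate found at the end is directly one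
  for the original system.\<close>

lemma farkas_elimination:
  fixes A :: "'i \<Rightarrow> 'v \<Rightarrow> real" and b :: "'i \<Rightarrow> real" and K :: "('i \<Rightarrow> real) set"
  assumes "finite V" "finite K"
    and "\<forall>c\<in>K. \<forall>i\<in>I. c i \<ge> 0"
    and "\<forall>c\<in>K. \<forall>v\<in>W - V. (\<Sum>i\<in>I. c i * A i v) = 0"
    and "\<nexists>x. \<forall>c\<in>K. (\<Sum>i\<in>I. c i * b i) \<le> (\<Sum>v\<in>V. (\<Sum>i\<in>I. c i * A i v) * x v)"
  shows "\<exists>c. (\<forall>i\<in>I. c i \<ge> 0) \<and> (\<forall>v\<in>W. (\<Sum>i\<in>I. c i * A i v) = 0) \<and> (\<Sum>i\<in>I. c i * b i) > 0"
  using assms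
proof (induction V arbitrary: K rule: finite_induct)
  case empty
  then obtain c where "c \<in> K" "(\<Sum>i\<in>I. c i * b i) > 0" by (auto simp: not_le)
  with empty.prems(2,3) show ?case by blast
next
  case (insert u V)
  define R where "R c v = (\<Sum>i\<in>I. c i * A i v)" for c v
  define \<beta> where "\<beta> c = (\<Sum>i\<in>I. c i * b i)" for c
  define P where "P = {c\<in>K. R c u > 0}"
  define N where "N = {c\<in>K. R c u < 0}"
  define combine where "combine = (\<lambda>(p, n). \<lambda>i. R p u * n i - R n u * p i)"
  define K' where "K' = {c\<in>K. R c u = 0} \<union> combine ` (P \<times> N)"
  have R_combine: "R (combine (p, n)) v = R p u * R n v - R n u * R p v" for p n v
    unfolding R_def combine_def by (simp add: sum_scaled_diff)
  have \<beta>_combine: "\<beta> (combine (p, n)) = R p u * \<beta> n - R n u * \<beta> p" for p n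
    unfolding \<beta>_def combine_def by (simp add: sum_scaled_diff)
  have "finite K'" unfolding K'_def P_def N_def using insert.prems(1) by auto
  moreover have "\<forall>c\<in>K'. \<forall>i\<in>I. c i \<ge> 0"
  proof (intro ballI)
    fix c i assume "c \<in> K'" "i \<in> I"
    then consider "c \<in> K" | p n where "p \<in> P" "n \<in> N" "c = combine (p, n)"
      unfolding K'_def by auto
    then show "c i \<ge> 0"
    proof cases
      case 2
      then have "R p u * n i \<ge> 0" "R n u * p i \<le> 0"
        using insert.prems(2) \<open>i \<in> I\<close> unfolding P_def N_def by (auto simp: mult_nonpos_nonneg)
      with 2 show ?thesis unfolding combine_def by simp
    qed (use insert.prems(2) \<open>i \<in> I\<close> in auto)
  qed
  moreover have "\<forall>c\<in>K'. \<forall>v\<in>W - V. R c v = 0"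
  proof (intro ballI)
    fix c v assume "c \<in> K'" "v \<in> W - V"
    then consider "v = u" | "v \<in> W - insert u V" by blast
    then show "R c v = 0"
    proof cases
      case 1
      with \<open>c \<in> K'\<close> show ?thesis unfolding K'_def by (auto simp: R_combine)
    next
      case 2
      with \<open>c \<in> K'\<close> insert.prems(3) show ?thesis unfolding K'_def P_def N_def
        by (auto simp: R_combine) (auto simp: R_def)
    qed
  qed
  moreover have "\<nexists>x. \<forall>c\<in>K'. \<beta> c \<le> (\<Sum>v\<in>V. R c v * x v)"
  proof
    assume "\<exists>x. \<forall>c\<in>K'. \<beta> c \<le> (\<Sum>v\<in>V. R c v * x v)"
    then obtain x where x: "\<forall>c\<in>K'. \<beta> c \<le> (\<Sum>v\<in>V. R c v * x v)" by blast
    have "\<exists>t. \<forall>c\<in>K. \<beta> c \<le> (\<Sum>v\<in>insert u V. R c v * (x(u := t)) v)"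
    proof (rule fourier_motzkin_elimination[OF insert.prems(1) insert.hyps(1,2)])
      show "\<beta> c \<le> (\<Sum>v\<in>V. R c v * x v)" if "c \<in> K" "R c u = 0" for c
        using x that unfolding K'_def by auto
      show "R p u * \<beta> n - R n u * \<beta> p \<le> (\<Sum>v\<in>V. (R p u * R n v - R n u * R p v) * x v)"
        if "p \<in> K" "n \<in> K" "R p u > 0" "R n u < 0" for p n
        using x[rule_format, of "combine (p, n)"] that
        unfolding K'_def P_def N_def R_combine \<beta>_combine by auto
    qed
    with insert.prems(4) show False unfolding R_def \<beta>_def by blast
  qed
  ultimately show ?case using insert.IH unfolding R_def \<beta>_def by blast
qed

lemma farkas_lemma:
  fixes A :: "'i \<Rightarrow> 'v \<Rightarrow> real" and b :: "'i \<Rightarrow> real"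
  assumes "finite V" "finite I"
    and "\<nexists>x. \<forall>i\<in>I. b i \<le> (\<Sum>v\<in>V. A i v * x v)"
  shows "\<exists>c. (\<forall>i\<in>I. c i \<ge> 0) \<and> (\<forall>v\<in>V. (\<Sum>i\<in>I. c i * A i v) = 0) \<and> (\<Sum>i\<in>I. c i * b i) > 0"
proof (rule farkas_elimination[where K = "(\<lambda>i j. of_bool (j = i)) ` I"])
  have unit: "(\<Sum>j\<in>I. of_bool (j = i) * f j) = f i" if "i \<in> I" for i and f :: "'i \<Rightarrow> real"
    using that assms(2) by simp
  show "\<nexists>x. \<forall>c\<in>(\<lambda>i j. of_bool (j = i)) ` I.
      (\<Sum>i\<in>I. c i * b i) \<le> (\<Sum>v\<in>V. (\<Sum>i\<in>I. c i * A i v) * x v)"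
    using assms(3) by (simp add: unit)
qed (use assms(1,2) in auto)

lemma farkas_lemma_nonneg:
  fixes A :: "'i \<Rightarrow> 'v \<Rightarrow> real" and b :: "'i \<Rightarrow> real"
  assumes "finite V" "finite I"
    and "\<nexists>x. (\<forall>v\<in>V. x v \<ge> 0) \<and> (\<forall>i\<in>I. b i \<le> (\<Sum>v\<in>V. A i v * x v))"
  shows "\<exists>l. (\<forall>i\<in>I. l i \<ge> 0) \<and> (\<forall>v\<in>V. (\<Sum>i\<in>I. l i * A i v) \<le> 0) \<and> (\<Sum>i\<in>I. l i * b i) > 0"
proof -
  define A' where "A' = case_sum A (\<lambda>w v. of_bool (v = w))"
  define b' :: "'i + 'v \<Rightarrow> real" where "b' = case_sum b (\<lambda>_. 0)"
  have nonneg_row_value: "(\<Sum>v\<in>V. A' (Inr w) v * x v) = x w" if "w \<in> V" for w x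
    using that assms(1) by (simp add: A'_def)
  have "\<nexists>x. \<forall>\<rho>\<in>I <+> V. b' \<rho> \<le> (\<Sum>v\<in>V. A' \<rho> v * x v)"
  proof
    assume "\<exists>x. \<forall>\<rho>\<in>I <+> V. b' \<rho> \<le> (\<Sum>v\<in>V. A' \<rho> v * x v)"
    then obtain x where x: "\<forall>\<rho>\<in>I <+> V. b' \<rho> \<le> (\<Sum>v\<in>V. A' \<rho> v * x v)" by blast
    have "x v \<ge> 0" if "v \<in> V" for v
      using x[rule_format, OF InrI[OF that]] that by (simp add: nonneg_row_value b'_def)
    moreover have "b i \<le> (\<Sum>v\<in>V. A i v * x v)" if "i \<in> I" for i
      using x[rule_format, OF InlI[OF that]] by (simp add: A'_def b'_def)
    ultimately show False using assms(3) by blast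
  qed
  with assms(1,2) obtain c where c: "\<forall>\<rho>\<in>I <+> V. c \<rho> \<ge> 0"
    "\<forall>v\<in>V. (\<Sum>\<rho>\<in>I <+> V. c \<rho> * A' \<rho> v) = 0" "(\<Sum>\<rho>\<in>I <+> V. c \<rho> * b' \<rho>) > 0"
    using farkas_lemma[of V "I <+> V" b' A'] by auto
  have "(\<Sum>i\<in>I. c (Inl i) * A i v) \<le> 0" if "v \<in> V" for v
  proof -
    have "(\<Sum>i\<in>I. c (Inl i) * A i v) + c (Inr v) = 0"
      using c(2)[rule_format, OF that] that assms(1,2) by (simp add: sum.Plus A'_def comp_def)
    moreover have "c (Inr v) \<ge> 0" using c(1) InrI[OF that] by (rule bspec)
    ultimately show ?thesis by linarith
  qed
  moreover have "(\<Sum>i\<in>I. c (Inl i) * b i) > 0"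
    using c(3) assms(1,2) by (simp add: sum.Plus b'_def comp_def)
  moreover have "c (Inl i) \<ge> 0" if "i \<in> I" for i using c(1) InlI[OF that] by (rule bspec)
  ultimately show ?thesis by (intro exI[of _ "\<lambda>i. c (Inl i)"]) blast
qed

lemma CC_dual_bound:
  assumes "CC G C a r i z" "\<forall>k\<in>C. \<beta> k \<ge> 0"
    and "\<forall>j\<in>G. (\<Sum>k\<in>C. a i j k * \<beta> k) - \<gamma> * p j \<le> \<delta> * d i j"
  shows "(\<Sum>k\<in>C. r i k * \<beta> k) \<le> \<gamma> * (\<Sum>j\<in>G. p j * z j) + \<delta> * (\<Sum>j\<in>G. d i j * z j)"
proof -
  have "(\<Sum>k\<in>C. r i k * \<beta> k) \<le> (\<Sum>k\<in>C. (\<Sum>j\<in>G. a i j k * z j) * \<beta> k)"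
    using assms(1,2) unfolding CC_def by (intro sum_mono mult_right_mono) auto
  also have "\<dots> = (\<Sum>j\<in>G. (\<Sum>k\<in>C. a i j k * \<beta> k) * z j)"
    by (simp add: sum_distrib_left sum_distrib_right sum.swap[of _ C G] mult_ac)
  also have "\<dots> \<le> (\<Sum>j\<in>G. (\<gamma> * p j + \<delta> * d i j) * z j)"
    using assms(1,3) unfolding CC_def by (intro sum_mono mult_right_mono) auto
  also have "\<dots> = \<gamma> * (\<Sum>j\<in>G. p j * z j) + \<delta> * (\<Sum>j\<in>G. d i j * z j)"
    by (simp add: sum.distrib sum_distrib_left algebra_simps)
  finally show ?thesis .
qed

datatype 'c ob_row = Cover 'c | Budget | Objective

lemma sum_ob_rows:
  assumes "finite C"
  shows "(\<Sum>\<rho>\<in>Cover ` C \<union> {Budget, Objective}. f \<rho>) = (\<Sum>k\<in>C. f (Cover k)) + f Budget + f Objective"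
  using assms by (subst sum.union_disjoint) (auto simp: sum.reindex inj_on_def add.assoc)

lemma OB_strong_duality:
  assumes "finite G" "finite C" "OB_optimal G C a r d m i p x" "w < (\<Sum>j\<in>G. d i j * x j)"
  shows "\<exists>\<beta> \<gamma>. dual_feasible G C a d i p \<beta> \<gamma> \<and> w < dual_obj C r m i \<beta> \<gamma>"
proof -
  txt \<open>Adding the constraint "delay at most \<open>w\<close>" makes OB-LP infeasible. Weak duality at \<open>x\<close>
    forces the Farkas multiplier of that row to be positive, and dividing by it yields the dual
    solution.\<close>
  define rows where "rows = Cover ` C \<union> {Budget, Objective}"
  define coef where
    "coef \<rho> j = (case \<rho> of Cover k \<Rightarrow> a i j k | Budget \<Rightarrow> - p j | Objective \<Rightarrow> - d i j)" for \<rho> j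
  define rhs where "rhs \<rho> = (case \<rho> of Cover k \<Rightarrow> r i k | Budget \<Rightarrow> - m i | Objective \<Rightarrow> - w)" for \<rho>
  have x: "CC G C a r i x" "(\<Sum>j\<in>G. p j * x j) \<le> m i"
    "\<And>z. OB_feasible G C a r m i p z \<Longrightarrow> (\<Sum>j\<in>G. d i j * x j) \<le> (\<Sum>j\<in>G. d i j * z j)"
    using assms(3) unfolding OB_optimal_def OB_feasible_def by auto
  have "\<nexists>z. (\<forall>j\<in>G. z j \<ge> 0) \<and> (\<forall>\<rho>\<in>rows. rhs \<rho> \<le> (\<Sum>j\<in>G. coef \<rho> j * z j))"
  proof
    assume "\<exists>z. (\<forall>j\<in>G. z j \<ge> 0) \<and> (\<forall>\<rho>\<in>rows. rhs \<rho> \<le> (\<Sum>j\<in>G. coef \<rho> j * z j))"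
    then obtain z where z: "\<forall>j\<in>G. z j \<ge> 0" "\<forall>\<rho>\<in>rows. rhs \<rho> \<le> (\<Sum>j\<in>G. coef \<rho> j * z j)"
      by blast
    have "OB_feasible G C a r m i p z"
      using z unfolding OB_feasible_def CC_def rows_def rhs_def coef_def by (auto simp: sum_negf)
    then have "(\<Sum>j\<in>G. d i j * x j) \<le> (\<Sum>j\<in>G. d i j * z j)" by (rule x(3))
    moreover have "(\<Sum>j\<in>G. d i j * z j) \<le> w"
      using z(2)[rule_format, of Objective] unfolding rows_def rhs_def coef_def by (simp add: sum_negf)
    ultimately show False using assms(4) by simp
  qed
  then obtain l where l: "\<forall>\<rho>\<in>rows. l \<rho> \<ge> 0" "\<forall>j\<in>G. (\<Sum>\<rho>\<in>rows. l \<rho> * coef \<rho> j) \<le> 0"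
    "(\<Sum>\<rho>\<in>rows. l \<rho> * rhs \<rho>) > 0"
    using farkas_lemma_nonneg[where V = G and I = rows and A = coef and b = rhs] assms(1,2)
    unfolding rows_def by blast
  have l_nonneg: "\<forall>k\<in>C. l (Cover k) \<ge> 0" "l Budget \<ge> 0" "l Objective \<ge> 0"
    using l(1) unfolding rows_def by auto
  have dual_ineq: "\<forall>j\<in>G. (\<Sum>k\<in>C. a i j k * l (Cover k)) - l Budget * p j \<le> l Objective * d i j"
    using l(2) unfolding rows_def sum_ob_rows[OF assms(2)] coef_def by (simp add: mult.commute)
  have obj_gt: "l Objective * w < (\<Sum>k\<in>C. r i k * l (Cover k)) - l Budget * m i"
    using l(3) unfolding rows_def sum_ob_rows[OF assms(2)] rhs_def by (simp add: mult.commute)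
  have "(\<Sum>k\<in>C. r i k * l (Cover k)) \<le> l Budget * (\<Sum>j\<in>G. p j * x j) + l Objective * (\<Sum>j\<in>G. d i j * x j)"
    using CC_dual_bound[where \<beta> = "l \<circ> Cover", OF x(1)] l_nonneg(1) dual_ineq by simp
  also have "\<dots> \<le> l Budget * m i + l Objective * (\<Sum>j\<in>G. d i j * x j)"
    using x(2) l_nonneg(2) by (simp add: mult_left_mono)
  finally have "l Objective * w < l Objective * (\<Sum>j\<in>G. d i j * x j)" using obj_gt by simp
  with l_nonneg(3) have pos: "l Objective > 0" by (cases "l Objective = 0") auto
  define \<beta> where "\<beta> k = l (Cover k) / l Objective" for k
  define \<gamma> where "\<gamma> = l Budget / l Objective"
  have "dual_feasible G C a d i p \<beta> \<gamma>"
    unfolding dual_feasible_def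
  proof (intro conjI ballI)
    fix j assume "j \<in> G"
    then have "((\<Sum>k\<in>C. a i j k * l (Cover k)) - l Budget * p j) / l Objective \<le> d i j"
      using dual_ineq pos by (simp add: divide_simps mult.commute)
    then show "(\<Sum>k\<in>C. a i j k * \<beta> k) - \<gamma> * p j \<le> d i j"
      unfolding \<beta>_def \<gamma>_def by (simp add: sum_divide_distrib diff_divide_distrib)
  qed (use l_nonneg pos in \<open>auto simp: \<beta>_def \<gamma>_def\<close>)
  moreover have "w < dual_obj C r m i \<beta> \<gamma>"
  proof -
    have "w < ((\<Sum>k\<in>C. r i k * l (Cover k)) - l Budget * m i) / l Objective"
      using obj_gt pos by (simp add: divide_simps mult.commute)
    then show ?thesis
      unfolding dual_obj_def \<beta>_def \<gamma>_def by (simp add: sum_divide_distrib diff_divide_distrib mult.commute)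
  qed
  ultimately show ?thesis by blast
qed

lemma OB_dual_optimal_budget_price_pos:
  assumes "finite G" "finite C" "OB_optimal G C a r d m i p x"
    and "CC G C a r i y" "(\<Sum>j\<in>G. d i j * y j) < (\<Sum>j\<in>G. d i j * x j)"
    and "dual_optimal G C a r d m i p \<beta> \<gamma>"
  shows "\<gamma> > 0"
proof (rule ccontr)
  assume "\<not> \<gamma> > 0"
  with assms(6) have feasible: "dual_feasible G C a d i p \<beta> 0" and "\<gamma> = 0"
    unfolding dual_optimal_def dual_feasible_def by auto
  obtain \<beta>' \<gamma>' where "dual_feasible G C a d i p \<beta>' \<gamma>'"
    and "(\<Sum>j\<in>G. d i j * y j) < dual_obj C r m i \<beta>' \<gamma>'"
    using OB_strong_duality[OF assms(1-3,5)] by blast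
  with assms(6) \<open>\<gamma> = 0\<close> have "(\<Sum>j\<in>G. d i j * y j) < (\<Sum>k\<in>C. r i k * \<beta> k)"
    unfolding dual_optimal_def dual_obj_def by fastforce
  moreover have "(\<Sum>k\<in>C. r i k * \<beta> k) \<le> 0 * (\<Sum>j\<in>G. p j * y j) + 1 * (\<Sum>j\<in>G. d i j * y j)"
    using feasible unfolding dual_feasible_def by (intro CC_dual_bound[OF assms(4)]) auto
  ultimately show False by simp
qed

lemma OB_optimal_budget_tight:
  assumes "OB_optimal G C a r d m i p x"
    and "CC G C a r i y" "(\<Sum>j\<in>G. d i j * y j) < (\<Sum>j\<in>G. d i j * x j)"
  shows "(\<Sum>j\<in>G. p j * x j) = m i"
proof (rule ccontr)
  assume "(\<Sum>j\<in>G. p j * x j) \<noteq> m i"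
  have x: "CC G C a r i x" "(\<Sum>j\<in>G. p j * x j) \<le> m i"
    using assms(1) unfolding OB_optimal_def OB_feasible_def by auto
  define s where "s = m i - (\<Sum>j\<in>G. p j * x j)"
  define D where "D = (\<Sum>j\<in>G. p j * y j) - (\<Sum>j\<in>G. p j * x j)"
  define t where "t = s / (s + \<bar>D\<bar>)"
  define z where "z j = (1 - t) * x j + t * y j" for j
  have "s > 0" using x(2) \<open>(\<Sum>j\<in>G. p j * x j) \<noteq> m i\<close> s_def by simp
  then have t: "0 < t" "t \<le> 1" "t * D \<le> s"
    unfolding t_def by (auto simp: divide_simps abs_if algebra_simps)
  have along: "(\<Sum>j\<in>G. c j * z j) = (1 - t) * (\<Sum>j\<in>G. c j * x j) + t * (\<Sum>j\<in>G. c j * y j)" for c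
  proof -
    have "(\<Sum>j\<in>G. c j * z j) = (\<Sum>j\<in>G. (1 - t) * (c j * x j) + t * (c j * y j))"
      unfolding z_def by (intro sum.cong) (auto simp: algebra_simps)
    then show ?thesis by (simp add: sum.distrib sum_distrib_left)
  qed
  have "CC G C a r i z"
    unfolding CC_def
  proof (intro conjI ballI)
    fix k assume "k \<in> C"
    then have "r i k \<le> (\<Sum>j\<in>G. a i j k * x j)" "r i k \<le> (\<Sum>j\<in>G. a i j k * y j)"
      using x(1) assms(2) unfolding CC_def by auto
    with t have "(1 - t) * r i k + t * r i k \<le> (\<Sum>j\<in>G. a i j k * z j)"
      unfolding along by (intro add_mono mult_left_mono) auto
    then show "r i k \<le> (\<Sum>j\<in>G. a i j k * z j)" by (simp add: algebra_simps)
  next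
    fix j assume "j \<in> G"
    then show "z j \<ge> 0" using x(1) assms(2) t unfolding CC_def z_def by auto
  qed
  moreover have "(\<Sum>j\<in>G. p j * z j) \<le> m i"
    using t unfolding along s_def D_def by (simp add: algebra_simps)
  ultimately have "(\<Sum>j\<in>G. d i j * x j) \<le> (\<Sum>j\<in>G. d i j * z j)"
    using assms(1) unfolding OB_optimal_def OB_feasible_def by blast
  then have "t * (\<Sum>j\<in>G. d i j * x j) \<le> t * (\<Sum>j\<in>G. d i j * y j)"
    unfolding along by (simp add: algebra_simps)
  with t(1) assms(3) show False by simp
qed

lemma equilibrium_allocation_improvable:
  assumes "finite A" "sufficient_demand A G C a r d" "market_equilibrium A G C a r d m X p" "i \<in> A"
  shows "\<exists>y. CC G C a r i y \<and> (\<Sum>j\<in>G. d i j * y j) < (\<Sum>j\<in>G. d i j * X i j)"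
proof -
  have optimal: "\<forall>i\<in>A. OB_optimal G C a r d m i p (X i)" and "supply_respecting A G X"
    using assms(3) unfolding market_equilibrium_def by auto
  then have CC: "\<forall>i\<in>A. CC G C a r i (X i)"
    unfolding OB_optimal_def OB_feasible_def by blast
  have "X i j \<le> 1" if "j \<in> G" for j
  proof -
    have "X i j \<le> (\<Sum>i'\<in>A. X i' j)"
      using assms(1,4) CC that by (intro member_le_sum) (auto simp: CC_def)
    with \<open>supply_respecting A G X\<close> that show ?thesis unfolding supply_respecting_def by fastforce
  qed
  then have "\<not> CC_optimal G C a r d i (X i)"
    using assms(2,4) unfolding sufficient_demand_def by force
  with CC assms(4) show ?thesis unfolding CC_optimal_def by (auto simp: not_le)
qed

theorem lemmaE1:
  fixes A :: "'a set" and G :: "'g set" and C :: "'c set"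
    and a :: "'a \<Rightarrow> 'g \<Rightarrow> 'c \<Rightarrow> real" and r :: "'a \<Rightarrow> 'c \<Rightarrow> real"
    and d :: "'a \<Rightarrow> 'g \<Rightarrow> real" and m :: "'a \<Rightarrow> real"
    and X :: "'a \<Rightarrow> 'g \<Rightarrow> real" and p :: "'g \<Rightarrow> real"
  assumes "finite A" and "finite G" and "finite C"
    and "\<forall>i\<in>A. \<forall>k\<in>C. r i k \<ge> 0"
    and "\<forall>i\<in>A. \<forall>j\<in>G. d i j \<ge> 0"
    and "\<forall>i\<in>A. m i > 0"
    and "sufficient_demand A G C a r d"
    and "market_equilibrium A G C a r d m X p"
  shows "(\<forall>i\<in>A. \<forall>\<beta> \<gamma>. dual_optimal G C a r d m i p \<beta> \<gamma> \<longrightarrow> \<gamma> > 0)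
       \<and> (\<forall>i\<in>A. (\<Sum>j\<in>G. p j * X i j) = m i)"
proof -
  have optimal: "OB_optimal G C a r d m i p (X i)" if "i \<in> A" for i
    using assms(8) that unfolding market_equilibrium_def by blast
  have improvable: "\<exists>y. CC G C a r i y \<and> (\<Sum>j\<in>G. d i j * y j) < (\<Sum>j\<in>G. d i j * X i j)"
    if "i \<in> A" for i
    using equilibrium_allocation_improvable[OF assms(1,7,8) that] by blast
  show ?thesis
    using OB_dual_optimal_budget_price_pos[OF assms(2,3) optimal] OB_optimal_budget_tight[OF optimal]
      improvable by blast
qed

end
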